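(* Let $\phi:\mathbb{N}\to\mathbb{N}$ be any function. For any instance oracle $f$ with $\max\{|f(G,v)|: G \text{ an } n\text{-node graph}, v\in G\}=o(n\phi(n))$ and any deterministic exploration algorithm $A$, there exist a constant $c>0$ and infinitely many $n$ such that for each of them there are an $n$-node graph $G$ and a starting node $v$ for which the agent executing $A$ with input $f(G,v)$ from $v$ does not explore $G$ within fewer than $c\, n^2/2^{\phi(n)}$ edge traversals. That is, exploration takes time $\Omega(n^2/2^{\phi(n)})$ on some $n$-node graph, for arbitrarily large $n$.
   Context: Model: a graph is a simple connected undirected graph with $n$ nodes. Nodes are unlabeled; at each node of degree $d$ the incident edges carry distinct port numbers $0,\dots,d-1$, arbitrarily assigned. A mobile agent starts at some node. At each step, located at a node $u$ whose degree it knows, it chooses a port at $u$ and traverses the corresponding edge to a neighbor $w$; upon arrival it learns the port number of this edge at $w$ and the degree of $w$. The agent must visit all nodes and stop; the time of exploration is the number of edge traversals. A deterministic exploration algorithm receives as input a binary string (advice); its size is its length. An instance oracle is a function assigning a binary string $f(G,v)$ to each pair $(G,v)$ where $G$ is a port-numbered graph and $v$ is the starting node of the agent in $G$. *)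

theory Defs
  imports Main "HOL-Library.Landau_Symbols"
begin

text \<open>Nodes are 0..<n (the labels are invisible to the agent).
  deg u is the degree of u; port u p = (w, q) means that port p at u leads to node w,
  where this edge has port number q at w.\<close>
record pgraph =
  deg  :: "nat \<Rightarrow> nat"
  port :: "nat \<Rightarrow> nat \<Rightarrow> nat \<times> nat"

definition pg_edges :: "nat \<Rightarrow> pgraph \<Rightarrow> (nat \<times> nat) set" where
  "pg_edges n G = {(u, w). u < n \<and> (\<exists>p < deg G u. fst (port G u p) = w)}"

text \<open>G is a simple connected undirected port-numbered graph with node set {0..<n};
  values outside the graph are normalised so that there are finitely many n-node graphs.\<close>
definition pgraph_wf :: "nat \<Rightarrow> pgraph \<Rightarrow> bool" where
  "pgraph_wf n G \<longleftrightarrow>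
     (\<forall>u < n. \<forall>p < deg G u.
        fst (port G u p) < n \<and> fst (port G u p) \<noteq> u \<and>
        snd (port G u p) < deg G (fst (port G u p)) \<and>
        port G (fst (port G u p)) (snd (port G u p)) = (u, p)) \<and>
     (\<forall>u < n. inj_on (\<lambda>p. fst (port G u p)) {..<deg G u}) \<and>
     (\<forall>u < n. \<forall>w < n. (u, w) \<in> (pg_edges n G)\<^sup>*) \<and>
     (\<forall>u. n \<le> u \<longrightarrow> deg G u = 0) \<and>
     (\<forall>u p. (n \<le> u \<or> deg G u \<le> p) \<longrightarrow> port G u p = (0, 0))"

text \<open>A deterministic exploration algorithm: given the advice, the degree of the start node,
  and the history of observations (port taken, port at arrival, degree of arrival node),
  it either stops (None) or chooses a port (Some p).\<close>
type_synonym algorithm = "bool list \<Rightarrow> nat \<Rightarrow> (nat \<times> nat \<times> nat) list \<Rightarrow> nat option"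

fun run :: "algorithm \<Rightarrow> bool list \<Rightarrow> pgraph \<Rightarrow> nat \<Rightarrow> nat \<Rightarrow>
             (nat \<times> (nat \<times> nat \<times> nat) list) option" where
  "run A x G v 0 = Some (v, [])"
| "run A x G v (Suc k) =
     (case run A x G v k of
        None \<Rightarrow> None
      | Some (u, h) \<Rightarrow>
          (case A x (deg G v) h of
             None \<Rightarrow> None
           | Some p \<Rightarrow>
               (if p < deg G u then
                  Some (fst (port G u p),
                        h @ [(p, snd (port G u p), deg G (fst (port G u p)))])
                else None)))"

definition explores_in :: "algorithm \<Rightarrow> bool list \<Rightarrow> nat \<Rightarrow> pgraph \<Rightarrow> nat \<Rightarrow> nat \<Rightarrow> bool" where
  "explores_in A x n G v k \<longleftrightarrow>
     (\<exists>u h. run A x G v k = Some (u, h) \<and> A x (deg G v) h = None) \<and>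
     {..<n} \<subseteq> {fst (the (run A x G v i)) | i. i \<le> k}"

definition max_advice :: "(pgraph \<Rightarrow> nat \<Rightarrow> bool list) \<Rightarrow> nat \<Rightarrow> nat" where
  "max_advice f n = Max {length (f G v) | G v. pgraph_wf n G \<and> v < n}"

end

theory Submission
  imports Defs "HOL-Library.Infinite_Set"
begin

text \<open>Subdivide a set S of a of the a^2 edges of the complete bipartite graph K_{a,a}; this gives
  a graph on n = 3a nodes. An agent that has explored it has visited all subdivision nodes, and
  the only information about S that reaches it during its walk is, at each first traversal of an
  edge of K_{a,a}, whether that edge is subdivided. Hence S is determined by the advice, the
  exploration time k and the set of the a steps at which a subdivided edge was discovered. If all
  these graphs were explored within T steps with advice of length at most b, this would inject the
  (a^2 choose a) choices of S into fewer than 2^(b+1) * T * (T choose a) triples, which is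
  impossible for b <= a * phi(n) and T of order a^2 / 2^phi(n).\<close>

definition set_rank :: "nat set \<Rightarrow> nat \<Rightarrow> nat" where
  "set_rank S e = card {e' \<in> S. e' < e}"

definition set_unrank :: "nat set \<Rightarrow> nat \<Rightarrow> nat" where
  "set_unrank S = the_inv_into S (set_rank S)"

lemma set_rank_strict_mono:
  "finite S \<Longrightarrow> e \<in> S \<Longrightarrow> e < e' \<Longrightarrow> set_rank S e < set_rank S e'"
  unfolding set_rank_def by (rule psubset_card_mono) auto

lemma set_rank_less_card: "finite S \<Longrightarrow> e \<in> S \<Longrightarrow> set_rank S e < card S"
  unfolding set_rank_def by (rule psubset_card_mono) auto

lemma inj_on_set_rank: "finite S \<Longrightarrow> inj_on (set_rank S) S"
  by (metis inj_onI linorder_neqE_nat set_rank_strict_mono less_irrefl)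

lemma set_rank_image: "finite S \<Longrightarrow> set_rank S ` S = {..<card S}"
  by (rule card_subset_eq) (auto simp: set_rank_less_card card_image inj_on_set_rank)

lemma set_unrank_in: "finite S \<Longrightarrow> j < card S \<Longrightarrow> set_unrank S j \<in> S"
  unfolding set_unrank_def
  by (rule the_inv_into_into[OF inj_on_set_rank]) (auto simp: set_rank_image)

lemma set_rank_unrank: "finite S \<Longrightarrow> j < card S \<Longrightarrow> set_rank S (set_unrank S j) = j"
  unfolding set_unrank_def
  by (rule f_the_inv_into_f[OF inj_on_set_rank]) (auto simp: set_rank_image)

lemma set_unrank_rank: "finite S \<Longrightarrow> e \<in> S \<Longrightarrow> set_unrank S (set_rank S e) = e"
  unfolding set_unrank_def by (rule the_inv_into_f_f[OF inj_on_set_rank])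

text \<open>Nodes u < a form the left and nodes a + w (w < a) the right side of K_{a,a}. Port p of a
  node leads to the p-th node of the other side, and the edge between u and a + w is numbered
  u * a + w. In subdivided_biclique a S the edge e \<in> S is subdivided by the node
  2 * a + set_rank S e, whose port 0 leads to the left and port 1 to the right endpoint.\<close>

definition biclique_edge :: "nat \<Rightarrow> nat \<Rightarrow> nat \<Rightarrow> nat" where
  "biclique_edge a u p = (if u < a then u * a + p else p * a + (u - a))"

definition biclique_port :: "nat \<Rightarrow> nat \<Rightarrow> nat \<Rightarrow> nat \<times> nat" where
  "biclique_port a u p = (if u < a then (a + p, u) else (p, u - a))"

definition biclique_side :: "nat \<Rightarrow> nat \<Rightarrow> nat" where
  "biclique_side a u = (if u < a then 0 else 1)"

definition subdivision_port :: "nat \<Rightarrow> nat \<Rightarrow> nat \<Rightarrow> nat \<times> nat" where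
  "subdivision_port a e s = (if s = 0 then (e div a, e mod a) else (a + e mod a, e div a))"

lemma right_node_cases:
  assumes "\<not> u < a" "u < 2 * (a::nat)" obtains w where "u = a + w" "w < a"
  using assms by (metis add_diff_inverse_nat mult_2 nat_add_left_cancel_less)

lemma biclique_port_involution:
  assumes "u < 2 * a" "p < a" "biclique_port a u p = (w, q)"
  shows "w < 2 * a" "q < a" "biclique_port a w q = (u, p)"
    and "biclique_edge a w q = biclique_edge a u p" "biclique_side a w \<noteq> biclique_side a u"
  using assms
  by (cases "u < a"; auto simp: biclique_port_def biclique_edge_def biclique_side_def
      elim: right_node_cases)+

lemma subdivision_port_biclique_edge:
  assumes "u < 2 * a" "p < a"
  shows "subdivision_port a (biclique_edge a u p) (biclique_side a u) = (u, p)"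
  using assms
  by (cases "u < a") (auto simp: subdivision_port_def biclique_edge_def biclique_side_def
      elim: right_node_cases)

lemma subdivision_port_inverse:
  assumes "e < a * a" "s < 2" "subdivision_port a e s = (w, q)"
  shows "w < 2 * a" "q < a" "biclique_edge a w q = e" "biclique_side a w = s"
proof -
  have a: "0 < a" using assms(1) by (cases a) auto
  have "e div a < a" using a assms(1) by (simp add: div_less_iff_less_mult)
  with a assms show "w < 2 * a" "q < a" "biclique_edge a w q = e" "biclique_side a w = s"
    by (auto simp: subdivision_port_def biclique_edge_def biclique_side_def mult.commute
        split: if_splits)
qed

definition subdivided_biclique :: "nat \<Rightarrow> nat set \<Rightarrow> pgraph" where
  "subdivided_biclique a S = \<lparr>
     deg = (\<lambda>u. if u < 2 * a then a else if u < 2 * a + card S then 2 else 0),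
     port = (\<lambda>u p.
       if u < 2 * a \<and> p < a then
         (if biclique_edge a u p \<in> S
          then (2 * a + set_rank S (biclique_edge a u p), biclique_side a u)
          else biclique_port a u p)
       else if 2 * a \<le> u \<and> u < 2 * a + card S \<and> p < 2
       then subdivision_port a (set_unrank S (u - 2 * a)) p
       else (0, 0))\<rparr>"

locale biclique_subdivision =
  fixes a :: nat and S :: "nat set"
  assumes a_pos: "0 < a" and S_subset: "S \<subseteq> {..<a * a}"
begin

abbreviation "G \<equiv> subdivided_biclique a S"

lemma finite_S: "finite S"
  using S_subset finite_subset by blast

lemma deg_G: "deg G u = (if u < 2 * a then a else if u < 2 * a + card S then 2 else 0)"
  by (simp add: subdivided_biclique_def)

lemma port_biclique_node:
  "u < 2 * a \<Longrightarrow> p < a \<Longrightarrow> port G u p =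
     (if biclique_edge a u p \<in> S
      then (2 * a + set_rank S (biclique_edge a u p), biclique_side a u)
      else biclique_port a u p)"
  by (simp add: subdivided_biclique_def)

lemma port_subdivision_node:
  "e \<in> S \<Longrightarrow> s < 2 \<Longrightarrow> port G (2 * a + set_rank S e) s = subdivision_port a e s"
  by (simp add: subdivided_biclique_def set_rank_less_card set_unrank_rank finite_S)

lemma subdivision_node_cases:
  assumes "\<not> u < 2 * a" "u < 2 * a + card S"
  obtains e where "e \<in> S" "u = 2 * a + set_rank S e"
proof
  have j: "u - 2 * a < card S" using assms by simp
  show "set_unrank S (u - 2 * a) \<in> S" using set_unrank_in[OF finite_S j] .
  show "u = 2 * a + set_rank S (set_unrank S (u - 2 * a))"
    using assms set_rank_unrank[OF finite_S j] by simp
qed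

lemma port_reverse:
  assumes u: "u < 2 * a + card S" and p: "p < deg G u" and wq: "port G u p = (w, q)"
  shows "w < 2 * a + card S \<and> w \<noteq> u \<and> q < deg G w \<and> port G w q = (u, p)"
proof (cases "u < 2 * a")
  case True
  with p have p: "p < a" by (simp add: deg_G)
  show ?thesis
  proof (cases "biclique_edge a u p \<in> S")
    case True
    let ?e = "biclique_edge a u p"
    have w: "w = 2 * a + set_rank S ?e" and q: "q = biclique_side a u"
      using wq True port_biclique_node[OF \<open>u < 2 * a\<close> p] by auto
    have "set_rank S ?e < card S" using True by (rule set_rank_less_card[OF finite_S])
    moreover have "q < 2" using q by (simp add: biclique_side_def)
    ultimately show ?thesis
      using w port_subdivision_node[OF True] subdivision_port_biclique_edge[OF \<open>u < 2 * a\<close> p]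
        \<open>u < 2 * a\<close> q by (simp add: deg_G)
  next
    case False
    with wq port_biclique_node[OF \<open>u < 2 * a\<close> p]
    have "biclique_port a u p = (w, q)" by simp
    note rev = biclique_port_involution[OF \<open>u < 2 * a\<close> p this]
    have "port G w q = (u, p)"
      using False rev port_biclique_node[OF rev(1,2)] by simp
    moreover have "w \<noteq> u" using rev(5) by blast
    ultimately show ?thesis using rev(1,2) by (simp add: deg_G)
  qed
next
  case False
  then obtain e where e: "e \<in> S" and u_eq: "u = 2 * a + set_rank S e"
    using u by (rule subdivision_node_cases)
  have p: "p < 2" using p u False by (simp add: deg_G)
  have "subdivision_port a e p = (w, q)" using wq port_subdivision_node[OF e p] u_eq by simp
  moreover have "e < a * a" using e S_subset by auto
  ultimately have w: "w < 2 * a" "q < a" "biclique_edge a w q = e" "biclique_side a w = p"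
    using subdivision_port_inverse p by blast+
  then have "port G w q = (u, p)" using port_biclique_node[OF w(1,2)] e u_eq by simp
  then show ?thesis using w(1,2) u_eq by (simp add: deg_G)
qed

lemma port_arrival_determined:
  assumes u: "u < 2 * a + card S" and p: "p1 < deg G u" "p2 < deg G u"
    and eq: "fst (port G u p1) = fst (port G u p2)"
  shows "port G u p1 = port G u p2"
proof (cases "u < 2 * a")
  case True
  with p have p1: "p1 < a" and p2: "p2 < a" by (simp_all add: deg_G)
  have lt: "fst (biclique_port a u p) < 2 * a" if "p < a" for p
    using biclique_port_involution(1)[OF True that prod.collapse[symmetric]] .
  have "snd (biclique_port a u p1) = snd (biclique_port a u p2)"
    by (simp add: biclique_port_def)
  then show ?thesis
    using eq lt[OF p1] lt[OF p2]
    unfolding port_biclique_node[OF True p1] port_biclique_node[OF True p2]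
    by (auto simp: prod_eq_iff split: if_splits)
next
  case False
  then obtain e where e: "e \<in> S" and u_eq: "u = 2 * a + set_rank S e"
    using u by (rule subdivision_node_cases)
  have "p1 < 2" "p2 < 2" using p u False by (simp_all add: deg_G)
  moreover have "e div a < a" using e S_subset a_pos by (auto simp: div_less_iff_less_mult)
  ultimately show ?thesis
    using eq port_subdivision_node[OF e] u_eq
    by (auto simp: subdivision_port_def less_2_cases_iff)
qed

lemma inj_on_port_target:
  assumes u: "u < 2 * a + card S"
  shows "inj_on (\<lambda>p. fst (port G u p)) {..<deg G u}"
proof (rule inj_onI)
  fix p1 p2 assume p: "p1 \<in> {..<deg G u}" "p2 \<in> {..<deg G u}"
    and eq: "fst (port G u p1) = fst (port G u p2)"
  obtain w q where wq1: "port G u p1 = (w, q)" by fastforce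
  moreover have wq2: "port G u p2 = (w, q)"
    using port_arrival_determined[OF u _ _ eq] p wq1 by simp
  ultimately show "p1 = p2"
    using port_reverse[OF u _ wq1] port_reverse[OF u _ wq2] p by simp
qed

abbreviation "E \<equiv> pg_edges (2 * a + card S) G"

lemma port_edge: "u < 2 * a + card S \<Longrightarrow> p < deg G u \<Longrightarrow> (u, fst (port G u p)) \<in> E"
  unfolding pg_edges_def by auto

lemma sym_edges: "sym E"
proof (rule symI)
  fix u w assume "(u, w) \<in> E"
  then obtain p where u: "u < 2 * a + card S" and p: "p < deg G u" and w: "fst (port G u p) = w"
    unfolding pg_edges_def by auto
  then have "port G u p = (w, snd (port G u p))" by (cases "port G u p") simp
  from port_reverse[OF u p this]
  show "(w, u) \<in> E" using port_edge[of w "snd (port G u p)"] by simp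
qed

lemma biclique_neighbour_reachable:
  assumes u: "u < 2 * a" and p: "p < a" and wq: "biclique_port a u p = (w, q)"
  shows "(u, w) \<in> E\<^sup>*"
proof (cases "biclique_edge a u p \<in> S")
  case True
  let ?m = "2 * a + set_rank S (biclique_edge a u p)"
  note rev = biclique_port_involution[OF u p wq]
  have m: "?m < 2 * a + card S" using set_rank_less_card[OF finite_S True] by simp
  have "biclique_side a w < 2" by (simp add: biclique_side_def)
  then have "port G ?m (biclique_side a w) = (w, q)"
    using port_subdivision_node[OF True] subdivision_port_biclique_edge[OF rev(1,2)] rev(4) by simp
  then have "(?m, w) \<in> E" using port_edge[OF m, of "biclique_side a w"] m
    by (simp add: deg_G biclique_side_def)
  moreover have "(u, ?m) \<in> E" using port_edge[of u p] u p True port_biclique_node[OF u p]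
    by (simp add: deg_G)
  ultimately show ?thesis by (meson converse_rtrancl_into_rtrancl r_into_rtrancl)
next
  case False
  then have "(u, w) \<in> E" using port_edge[of u p] u p wq port_biclique_node[OF u p]
    by (simp add: deg_G)
  then show ?thesis by blast
qed

lemma reachable_from_0: "x < 2 * a + card S \<Longrightarrow> (0, x) \<in> E\<^sup>*"
proof -
  have right: "(0, a + w) \<in> E\<^sup>*" if "w < a" for w
    using biclique_neighbour_reachable[of 0 w] a_pos that by (simp add: biclique_port_def)
  have left: "(0, u) \<in> E\<^sup>*" if "u < a" for u
    using biclique_neighbour_reachable[of a u] right[of 0] a_pos that
    by (simp add: biclique_port_def)
  assume x: "x < 2 * a + card S"
  show ?thesis
  proof (cases "x < 2 * a")
    case True
    then show ?thesis using left right by (cases "x < a") (auto elim: right_node_cases)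
  next
    case False
    then obtain e where e: "e \<in> S" and x_eq: "x = 2 * a + set_rank S e"
      using x by (rule subdivision_node_cases)
    obtain w q where wq: "subdivision_port a e 0 = (w, q)" by fastforce
    have "e < a * a" using e S_subset by auto
    note inv = subdivision_port_inverse[OF this _ wq]
    have "port G w q = (x, 0)" using port_biclique_node[OF inv(1,2)] inv e x_eq by simp
    then have "(w, x) \<in> E" using port_edge[of w q] inv(1,2) by (simp add: deg_G)
    moreover have "(0, w) \<in> E\<^sup>*"
      using inv(1) left right by (cases "w < a") (auto elim: right_node_cases)
    ultimately show ?thesis by simp
  qed
qed

theorem pgraph_wf_subdivided_biclique: "pgraph_wf (2 * a + card S) G"
proof -
  have "fst (port G u p) < 2 * a + card S \<and> fst (port G u p) \<noteq> u \<and>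
        snd (port G u p) < deg G (fst (port G u p)) \<and>
        port G (fst (port G u p)) (snd (port G u p)) = (u, p)"
    if "u < 2 * a + card S" "p < deg G u" for u p
    using port_reverse[OF that prod.collapse[symmetric]] by simp
  moreover have "(u, w) \<in> E\<^sup>*" if "u < 2 * a + card S" "w < 2 * a + card S" for u w
    using reachable_from_0[OF that(1)] reachable_from_0[OF that(2)] sym_rtrancl[OF sym_edges]
    by (meson rtrancl_trans symD)
  ultimately show ?thesis
    unfolding pgraph_wf_def using inj_on_port_target
    by (auto simp: deg_G subdivided_biclique_def)
qed

end

text \<open>A walk on subdivided_biclique a S followed without knowing S. The position Inl u is the
  node u < 2 * a and Inr e the node subdividing e; besides the history the state records the set K
  of edges found to be subdivided and the set Tr of biclique edges traversed so far. The oracle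
  ask i e is consulted only when e is traversed for the first time, at step i.\<close>

type_synonym sim_state = "(nat + nat) \<times> (nat \<times> nat \<times> nat) list \<times> nat set \<times> nat set"

definition sim_step ::
  "algorithm \<Rightarrow> bool list \<Rightarrow> nat \<Rightarrow> (nat \<Rightarrow> nat \<Rightarrow> bool) \<Rightarrow> nat \<Rightarrow> sim_state \<Rightarrow> sim_state option"
where
  "sim_step A x a ask i = (\<lambda>(pos, h, K, Tr). case A x a h of None \<Rightarrow> None | Some p \<Rightarrow>
     (case pos of
        Inl u \<Rightarrow>
          if p < a then
            (let e = biclique_edge a u p in
             if (if e \<in> Tr then e \<in> K else ask i e)
             then Some (Inr e, h @ [(p, biclique_side a u, 2)], insert e K, insert e Tr)
             else Some (Inl (fst (biclique_port a u p)),
                        h @ [(p, snd (biclique_port a u p), a)], K, insert e Tr))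
          else None
      | Inr e \<Rightarrow>
          if p < 2 then
            Some (Inl (fst (subdivision_port a e p)),
                  h @ [(p, snd (subdivision_port a e p), a)], K, Tr)
          else None))"

fun sim_run ::
  "algorithm \<Rightarrow> bool list \<Rightarrow> nat \<Rightarrow> (nat \<Rightarrow> nat \<Rightarrow> bool) \<Rightarrow> nat \<Rightarrow> sim_state option"
where
  "sim_run A x a ask 0 = Some (Inl 0, [], {}, {})"
| "sim_run A x a ask (Suc i) =
     (case sim_run A x a ask i of None \<Rightarrow> None | Some st \<Rightarrow> sim_step A x a ask i st)"

definition fresh_edge :: "algorithm \<Rightarrow> bool list \<Rightarrow> nat \<Rightarrow> sim_state \<Rightarrow> nat option" where
  "fresh_edge A x a = (\<lambda>(pos, h, K, Tr).
     case (pos, A x a h) of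
       (Inl u, Some p) \<Rightarrow>
         if p < a \<and> biclique_edge a u p \<notin> Tr then Some (biclique_edge a u p) else None
     | _ \<Rightarrow> None)"

definition sim_known :: "sim_state \<Rightarrow> nat set" where
  "sim_known = (\<lambda>(pos, h, K, Tr). K)"

lemma sim_run_oracle_cong:
  assumes "\<And>i st e. i < j \<Longrightarrow> sim_run A x a ask i = Some st \<Longrightarrow> fresh_edge A x a st = Some e \<Longrightarrow>
             ask' i e = ask i e"
  shows "sim_run A x a ask' j = sim_run A x a ask j"
  using assms
proof (induction j)
  case (Suc j)
  then have IH: "sim_run A x a ask' j = sim_run A x a ask j" by simp
  show ?case
  proof (cases "sim_run A x a ask j")
    case (Some st)
    obtain pos h K Tr where st: "st = (pos, h, K, Tr)" by (cases st)
    have "sim_step A x a ask' j st = sim_step A x a ask j st"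
    proof (cases "A x a h")
      case (Some p)
      show ?thesis
      proof (cases pos)
        case (Inl u)
        have "fresh_edge A x a st = Some (biclique_edge a u p)"
          if "p < a" "biclique_edge a u p \<notin> Tr"
          using st Inl Some that by (simp add: fresh_edge_def)
        then show ?thesis
          using Suc.prems \<open>sim_run A x a ask j = Some st\<close> Some Inl st
          by (auto simp: sim_step_def Let_def)
      qed (simp add: sim_step_def st Some)
    qed (simp add: sim_step_def st)
    then show ?thesis using IH Some by simp
  qed (use IH in simp)
qed simp

lemma sim_run_known_mono:
  "sim_run A x a ask k = Some st \<Longrightarrow> i \<le> k \<Longrightarrow>
     \<exists>st'. sim_run A x a ask i = Some st' \<and> sim_known st' \<subseteq> sim_known st"
proof (induction k arbitrary: st)
  case (Suc k)
  then obtain st0 where st0: "sim_run A x a ask k = Some st0"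
    and step: "sim_step A x a ask k st0 = Some st" by (auto split: option.splits)
  have "sim_known st0 \<subseteq> sim_known st"
    using step
    by (auto simp: sim_step_def sim_known_def Let_def split: option.splits sum.splits if_splits)
  show ?case
  proof (cases "i = Suc k")
    case False
    with Suc.prems(2) have "i \<le> k" by simp
    then show ?thesis using Suc.IH[OF st0] \<open>sim_known st0 \<subseteq> sim_known st\<close> by blast
  qed (use Suc.prems in blast)
qed simp

context biclique_subdivision
begin

abbreviation "S_oracle \<equiv> \<lambda>(i::nat) e. e \<in> S"

fun sim_node :: "nat + nat \<Rightarrow> nat" where
  "sim_node (Inl u) = u"
| "sim_node (Inr e) = 2 * a + set_rank S e"

definition sim_invariant :: "sim_state \<Rightarrow> bool" where
  "sim_invariant = (\<lambda>(pos, h, K, Tr). K = Tr \<inter> S \<and>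
     (\<forall>u. pos = Inl u \<longrightarrow> u < 2 * a) \<and> (\<forall>e. pos = Inr e \<longrightarrow> e \<in> K))"

lemma sim_invariant_step:
  assumes inv: "sim_invariant (pos, h, K, Tr)"
    and step: "sim_step A x a S_oracle i (pos, h, K, Tr) = Some st'"
  shows "sim_invariant st'"
proof -
  obtain p where p: "A x a h = Some p" using step by (auto simp: sim_step_def split: option.splits)
  have K: "K = Tr \<inter> S" using inv by (simp add: sim_invariant_def)
  show ?thesis
  proof (cases pos)
    case (Inl u)
    then have u: "u < 2 * a" using inv by (simp add: sim_invariant_def)
    have pa: "p < a" using step p Inl by (auto simp: sim_step_def split: if_splits)
    have "(if biclique_edge a u p \<in> Tr then biclique_edge a u p \<in> K else biclique_edge a u p \<in> S)
          \<longleftrightarrow> biclique_edge a u p \<in> S" using K by auto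
    then show ?thesis
      using step p Inl K biclique_port_involution(1)[OF u pa prod.collapse[symmetric]]
      by (auto simp: sim_step_def sim_invariant_def Let_def pa split: if_splits)
  next
    case (Inr e)
    then have "e < a * a" using inv S_subset by (auto simp: sim_invariant_def)
    then have "fst (subdivision_port a e q) < 2 * a" if "q < 2" for q
      using subdivision_port_inverse(1)[OF _ that prod.collapse[symmetric]] by blast
    then show ?thesis
      using step p Inr inv by (auto simp: sim_step_def sim_invariant_def split: if_splits)
  qed
qed

lemma sim_invariant_sim_run: "sim_run A x a S_oracle i = Some st \<Longrightarrow> sim_invariant st"
proof (induction i arbitrary: st)
  case 0 then show ?case by (auto simp: sim_invariant_def a_pos)
next
  case (Suc i)
  then obtain st0 where "sim_run A x a S_oracle i = Some st0"
    and "sim_step A x a S_oracle i st0 = Some st" by (auto split: option.splits)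
  with Suc.IH show ?case by (metis sim_invariant_step prod.collapse)
qed

definition sim_view :: "sim_state \<Rightarrow> nat \<times> (nat \<times> nat \<times> nat) list" where
  "sim_view = (\<lambda>(pos, h, K, Tr). (sim_node pos, h))"

lemma sim_step_simulates_move:
  assumes inv: "sim_invariant (pos, h, K, Tr)" and p: "A x a h = Some p"
  shows "(if p < deg G (sim_node pos)
          then Some (fst (port G (sim_node pos) p),
                     h @ [(p, snd (port G (sim_node pos) p), deg G (fst (port G (sim_node pos) p)))])
          else None)
       = map_option sim_view (sim_step A x a S_oracle i (pos, h, K, Tr))"
proof (cases pos)
  case (Inl u)
  then have u: "u < 2 * a" using inv by (simp add: sim_invariant_def)
  show ?thesis
  proof (cases "p < a")
    case True
    let ?e = "biclique_edge a u p"
    have K: "K = Tr \<inter> S" using inv by (simp add: sim_invariant_def)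
    have "set_rank S ?e < card S" if "?e \<in> S" using set_rank_less_card[OF finite_S that] .
    moreover have "fst (biclique_port a u p) < 2 * a"
      using biclique_port_involution(1)[OF u True prod.collapse[symmetric]] .
    ultimately show ?thesis
      using Inl p K u True port_biclique_node[OF u True]
      by (auto simp: sim_step_def sim_view_def Let_def deg_G)
  next
    case False
    then show ?thesis using Inl p u by (simp add: sim_step_def deg_G)
  qed
next
  case (Inr e)
  then have e: "e \<in> S" using inv by (auto simp: sim_invariant_def)
  then have "set_rank S e < card S" "e < a * a"
    using set_rank_less_card[OF finite_S] S_subset by auto
  moreover have "fst (subdivision_port a e q) < 2 * a" if "e < a * a" "q < 2" for q
    using subdivision_port_inverse(1)[OF that prod.collapse[symmetric]] .
  ultimately show ?thesis
    using Inr p port_subdivision_node[OF e]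
    by (auto simp: sim_step_def sim_view_def deg_G)
qed

lemma run_eq_sim_run: "run A x G 0 k = map_option sim_view (sim_run A x a S_oracle k)"
proof (induction k)
  case 0 then show ?case by (simp add: sim_view_def)
next
  case (Suc k)
  show ?case
  proof (cases "sim_run A x a S_oracle k")
    case (Some st)
    obtain pos h K Tr where st: "st = (pos, h, K, Tr)" by (cases st)
    have inv: "sim_invariant st" using sim_invariant_sim_run[OF Some] .
    have "deg G 0 = a" using a_pos by (simp add: deg_G)
    then show ?thesis
      using Suc.IH Some st sim_step_simulates_move[OF inv[unfolded st], of A x _ k]
      by (auto simp: sim_view_def sim_step_def split: option.split)
  qed (use Suc.IH in simp)
qed

lemma sim_known_step:
  assumes inv: "sim_invariant st" and step: "sim_step A x a S_oracle i st = Some st'"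
  shows "sim_known st' = sim_known st \<union> (set_option (fresh_edge A x a st) \<inter> S)"
    and "fresh_edge A x a st = Some e \<Longrightarrow> e \<notin> sim_known st"
proof -
  obtain pos h K Tr where st: "st = (pos, h, K, Tr)" by (cases st)
  have K: "K = Tr \<inter> S" using inv st by (simp add: sim_invariant_def)
  show "sim_known st' = sim_known st \<union> (set_option (fresh_edge A x a st) \<inter> S)"
    using step st K
    by (auto simp: sim_step_def fresh_edge_def sim_known_def Let_def
        split: option.splits sum.splits if_splits)
  show "fresh_edge A x a st = Some e \<Longrightarrow> e \<notin> sim_known st"
    using st K
    by (auto simp: fresh_edge_def sim_known_def split: option.splits sum.splits if_splits)
qed

definition discovery_steps :: "algorithm \<Rightarrow> bool list \<Rightarrow> nat \<Rightarrow> nat set" where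
  "discovery_steps A x k = {i. i < k \<and>
     (\<exists>st e. sim_run A x a S_oracle i = Some st \<and> fresh_edge A x a st = Some e \<and> e \<in> S)}"

lemma card_sim_known:
  "sim_run A x a S_oracle k = Some st \<Longrightarrow> card (sim_known st) = card (discovery_steps A x k)"
proof (induction k arbitrary: st)
  case 0 then show ?case by (auto simp: sim_known_def discovery_steps_def)
next
  case (Suc k)
  then obtain st0 where st0: "sim_run A x a S_oracle k = Some st0"
    and step: "sim_step A x a S_oracle k st0 = Some st" by (auto split: option.splits)
  note inv = sim_invariant_sim_run[OF st0]
  have fin: "finite (sim_known st0)"
    using inv finite_S by (auto simp: sim_invariant_def sim_known_def intro: finite_subset)
  have steps: "discovery_steps A x (Suc k) = discovery_steps A x k \<union>
      {i. i = k \<and> (\<exists>e. fresh_edge A x a st0 = Some e \<and> e \<in> S)}"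
    using st0 by (auto simp: discovery_steps_def less_Suc_eq simp del: split_paired_Ex)
  show ?case
  proof (cases "\<exists>e. fresh_edge A x a st0 = Some e \<and> e \<in> S")
    case True
    then obtain e where e: "fresh_edge A x a st0 = Some e" "e \<in> S" by blast
    have "sim_known st = insert e (sim_known st0)" "e \<notin> sim_known st0"
      using sim_known_step[OF inv step] e by auto
    moreover have "discovery_steps A x (Suc k) = insert k (discovery_steps A x k)"
      using steps True by auto
    ultimately show ?thesis
      using Suc.IH[OF st0] fin by (simp add: discovery_steps_def)
  next
    case False
    then have "sim_known st = sim_known st0" using sim_known_step(1)[OF inv step] by auto
    then show ?thesis using Suc.IH[OF st0] steps False by simp
  qed
qed

lemma sim_known_explored:
  assumes explores: "explores_in A x (2 * a + card S) G 0 k"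
  obtains st where "sim_run A x a S_oracle k = Some st" "sim_known st = S"
proof -
  obtain u h where "run A x G 0 k = Some (u, h)" using explores unfolding explores_in_def by blast
  then obtain st where st: "sim_run A x a S_oracle k = Some st"
    using run_eq_sim_run[of A x k] by auto
  have "S \<subseteq> sim_known st"
  proof
    fix e assume e: "e \<in> S"
    then have "2 * a + set_rank S e < 2 * a + card S" using set_rank_less_card[OF finite_S] by simp
    then obtain i where i: "i \<le> k" and visit: "2 * a + set_rank S e = fst (the (run A x G 0 i))"
      using explores unfolding explores_in_def by blast
    obtain sti where sti: "sim_run A x a S_oracle i = Some sti"
      and sub: "sim_known sti \<subseteq> sim_known st"
      using sim_run_known_mono[OF st i] by blast
    obtain pos h K Tr where sti_eq: "sti = (pos, h, K, Tr)" by (cases sti)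
    have node: "sim_node pos = 2 * a + set_rank S e"
      using visit run_eq_sim_run[of A x i] sti sti_eq by (simp add: sim_view_def)
    have inv: "sim_invariant sti" using sim_invariant_sim_run[OF sti] .
    obtain e' where pos: "pos = Inr e'" "e' \<in> K"
      using inv node sti_eq by (cases pos) (auto simp: sim_invariant_def)
    then have "e' \<in> S" using inv sti_eq by (simp add: sim_invariant_def)
    with pos node e have "e' = e" using inj_on_set_rank[OF finite_S] by (auto dest: inj_onD)
    then show "e \<in> sim_known st" using pos sub sti_eq by (auto simp: sim_known_def)
  qed
  moreover have "sim_known st \<subseteq> S"
    using sim_invariant_sim_run[OF st] by (auto simp: sim_invariant_def sim_known_def)
  ultimately show ?thesis using st that by blast
qed

theorem subdivision_decodable:
  assumes explores: "explores_in A x (2 * a + card S) G 0 k"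
  obtains st where "sim_run A x a (\<lambda>i e. i \<in> discovery_steps A x k) k = Some st"
    "sim_known st = S" "card (discovery_steps A x k) = card S"
proof -
  obtain st where st: "sim_run A x a S_oracle k = Some st" "sim_known st = S"
    using sim_known_explored[OF explores] .
  have "sim_run A x a (\<lambda>i e. i \<in> discovery_steps A x k) k = sim_run A x a S_oracle k"
    by (rule sim_run_oracle_cong) (auto simp: discovery_steps_def)
  then show ?thesis using that st card_sim_known[OF st(1)] by simp
qed

end

lemma pgraph_wf_deg_le: "pgraph_wf n G \<Longrightarrow> u < n \<Longrightarrow> deg G u \<le> n"
proof -
  assume wf: "pgraph_wf n G" and u: "u < n"
  have "inj_on (\<lambda>p. fst (port G u p)) {..<deg G u}"
    and "(\<lambda>p. fst (port G u p)) ` {..<deg G u} \<subseteq> {..<n}"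
    using wf u unfolding pgraph_wf_def by auto
  then show ?thesis using card_inj_on_le[of _ "{..<deg G u}" "{..<n}"] by simp
qed

lemma pgraph_wf_port_bounded:
  assumes wf: "pgraph_wf n G"
  shows "port G u p \<in> {..n} \<times> {..n}" "n \<le> u \<or> n \<le> p \<Longrightarrow> port G u p = (0, 0)"
proof -
  have deg: "deg G u \<le> n" for u
    using pgraph_wf_deg_le[OF wf] wf unfolding pgraph_wf_def by (cases "u < n") auto
  show "port G u p \<in> {..n} \<times> {..n}"
  proof (cases "u < n \<and> p < deg G u")
    case True
    then have "fst (port G u p) < n" "snd (port G u p) < deg G (fst (port G u p))"
      using wf unfolding pgraph_wf_def by auto
    then show ?thesis using deg[of "fst (port G u p)"] by (cases "port G u p") auto
  qed (use wf in \<open>auto simp: pgraph_wf_def\<close>)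
  show "n \<le> u \<or> n \<le> p \<Longrightarrow> port G u p = (0, 0)"
    using wf deg[of u] unfolding pgraph_wf_def by (meson order.trans)
qed

lemma finite_pgraph_wf: "finite {G. pgraph_wf n G}"
proof -
  let ?D = "{d. \<forall>u. (u \<in> {..<n} \<longrightarrow> d u \<in> {..n}) \<and> (u \<notin> {..<n} \<longrightarrow> d u = 0)}"
  let ?P = "{P. \<forall>z. (z \<in> {..<n} \<times> {..<n} \<longrightarrow> P z \<in> {..n} \<times> {..n}) \<and>
                     (z \<notin> {..<n} \<times> {..<n} \<longrightarrow> P z = (0, 0))}"
  have "{G. pgraph_wf n G} \<subseteq> (\<lambda>(d, P). \<lparr>deg = d, port = curry P\<rparr>) ` (?D \<times> ?P)"
  proof
    fix G assume "G \<in> {G. pgraph_wf n G}"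
    then have wf: "pgraph_wf n G" by simp
    have "deg G \<in> ?D" using pgraph_wf_deg_le[OF wf] wf by (auto simp: pgraph_wf_def)
    moreover have "case_prod (port G) \<in> ?P" using pgraph_wf_port_bounded[OF wf] by auto
    ultimately show "G \<in> (\<lambda>(d, P). \<lparr>deg = d, port = curry P\<rparr>) ` (?D \<times> ?P)"
      by (intro image_eqI[where x = "(deg G, case_prod (port G))"]) auto
  qed
  moreover have "finite (?D \<times> ?P)"
    by (intro finite_cartesian_product finite_set_of_finite_funs) auto
  ultimately show ?thesis by (meson finite_imageI finite_subset)
qed

lemma length_le_max_advice: "pgraph_wf n G \<Longrightarrow> v < n \<Longrightarrow> length (f G v) \<le> max_advice f n"
proof -
  assume "pgraph_wf n G" "v < n"
  have "{length (f G v) | G v. pgraph_wf n G \<and> v < n} =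
        (\<lambda>(G, v). length (f G v)) ` ({G. pgraph_wf n G} \<times> {..<n})" by auto
  then have "finite {length (f G v) | G v. pgraph_wf n G \<and> v < n}"
    using finite_pgraph_wf by simp
  then show ?thesis unfolding max_advice_def using \<open>pgraph_wf n G\<close> \<open>v < n\<close> by (intro Max_ge) auto
qed

lemma card_bool_lists_length_le: "card {xs :: bool list. length xs \<le> b} < 2 ^ (b + 1)"
proof -
  have "(\<Sum>i\<le>b. (2::nat) ^ i) < 2 ^ (b + 1)" by (induction b) auto
  then show ?thesis using card_lists_length_le[of "UNIV :: bool set" b] by simp
qed

theorem exists_unexplored_subdivision:
  fixes f :: "pgraph \<Rightarrow> nat \<Rightarrow> bool list" and A :: algorithm
  assumes a: "0 < a"
    and advice: "\<And>S. S \<subseteq> {..<a * a} \<Longrightarrow> card S = m \<Longrightarrow> length (f (subdivided_biclique a S) 0) \<le> b"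
    and few: "2 ^ (b + 1) * T * (T choose m) < (a * a choose m)"
  shows "\<exists>S. S \<subseteq> {..<a * a} \<and> card S = m \<and>
           \<not> (\<exists>k<T. explores_in A (f (subdivided_biclique a S) 0) (2 * a + m)
                              (subdivided_biclique a S) 0 k)"
proof (rule ccontr)
  let ?G = "subdivided_biclique a"
  define Fam where "Fam = {S. S \<subseteq> {..<a * a} \<and> card S = m}"
  assume "\<not> ?thesis"
  then have fast: "\<exists>k<T. explores_in A (f (?G S) 0) (2 * a + m) (?G S) 0 k" if "S \<in> Fam" for S
    using that unfolding Fam_def by blast
  define time where
    "time S = (SOME k. k < T \<and> explores_in A (f (?G S) 0) (2 * a + m) (?G S) 0 k)" for S
  define encode where
    "encode S =
       (f (?G S) 0, time S, biclique_subdivision.discovery_steps a S A (f (?G S) 0) (time S))"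
    for S
  define decode where
    "decode = (\<lambda>(x, k, D). sim_known (the (sim_run A x a (\<lambda>i e. i \<in> D) k)))"
  let ?Codes = "{xs :: bool list. length xs \<le> b} \<times> {..<T} \<times> {D. D \<subseteq> {..<T} \<and> card D = m}"
  have encode: "decode (encode S) = S \<and> encode S \<in> ?Codes" if S: "S \<in> Fam" for S
  proof -
    interpret biclique_subdivision a S using a S unfolding Fam_def by unfold_locales auto
    have "time S < T \<and> explores_in A (f G 0) (2 * a + m) G 0 (time S)"
      unfolding time_def using fast[OF S] by (rule someI_ex)
    then have time: "time S < T" "explores_in A (f G 0) (2 * a + card S) G 0 (time S)"
      using S unfolding Fam_def by auto
    obtain st
      where "sim_run A (f G 0) a (\<lambda>i e. i \<in> discovery_steps A (f G 0) (time S)) (time S) = Some st"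
      "sim_known st = S" "card (discovery_steps A (f G 0) (time S)) = card S"
      using subdivision_decodable[OF time(2)] .
    moreover have "discovery_steps A (f G 0) (time S) \<subseteq> {..<time S}"
      by (auto simp: discovery_steps_def)
    ultimately show ?thesis
      using time(1) S advice unfolding encode_def decode_def Fam_def by auto
  qed
  then have "inj_on encode Fam" by (metis inj_on_inverseI)
  moreover have "encode ` Fam \<subseteq> ?Codes" using encode by blast
  moreover have "finite ?Codes"
    using finite_lists_length_le[of "UNIV :: bool set" b] by (intro finite_cartesian_product) auto
  ultimately have "card Fam \<le> card ?Codes" by (rule card_inj_on_le)
  also have "\<dots> = card {xs :: bool list. length xs \<le> b} * T * (T choose m)"
    by (simp add: card_cartesian_product n_subsets)
  also have "\<dots> \<le> 2 ^ (b + 1) * T * (T choose m)"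
    using card_bool_lists_length_le[of b] by (intro mult_right_mono) auto
  also have "\<dots> < card Fam" using few n_subsets[of "{..<a * a}" m] by (simp add: Fam_def)
  finally show False by simp
qed

lemma fact_mult_pow_le_fact: "fact m * (m + 1) ^ k \<le> (fact (m + k) :: nat)"
proof (induction k)
  case (Suc k)
  have "fact m * (m + 1) ^ Suc k = fact m * (m + 1) ^ k * (m + 1)" by (simp add: algebra_simps)
  also have "\<dots> \<le> fact (m + k) * (m + k + 1)" using Suc.IH by (intro mult_mono) auto
  also have "\<dots> = fact (m + Suc k)" by (simp add: algebra_simps)
  finally show ?case .
qed simp

lemma pow_le_fact_mult_choose: "k \<le> M \<Longrightarrow> (M - k + 1) ^ k \<le> fact k * (M choose k)"
proof -
  assume kM: "k \<le> M"
  have "fact (M - k) * (M - k + 1) ^ k \<le> (fact (M - k + k) :: nat)" by (rule fact_mult_pow_le_fact)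
  also have "\<dots> = fact (M - k) * (fact k * (M choose k))"
    using binomial_fact_lemma[OF kM] kM by (simp add: ac_simps)
  finally show ?thesis by simp
qed

lemma exploration_codes_less_binomial:
  fixes a b T ph :: nat
  assumes a: "2 \<le> a" and b: "b \<le> a * ph" and T: "T < a \<or> 16 * 2 ^ ph * T \<le> a * a"
  shows "2 ^ (b + 1) * T * (T choose a) < (a * a choose a)"
proof (cases "T < a")
  case True
  then have "T choose a = 0" by simp
  moreover have "0 < a * a choose a" using le_square[of a] by (simp only: zero_less_binomial_iff)
  ultimately show ?thesis by (metis mult_0_right)
next
  case False
  with T have T16: "16 * 2 ^ ph * T \<le> a * a" by simp
  define L where "L = a * a - a + 1"
  have "2 * a \<le> a * a" using a by (intro mult_right_mono) auto
  then have "8 * 2 ^ ph * T \<le> L" using T16 unfolding L_def by linarith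
  then have "(8 * 2 ^ ph * T) ^ a \<le> L ^ a" by (rule power_mono) simp
  then have L_pow: "8 ^ a * (2 ^ (ph * a) * T ^ a) \<le> L ^ a"
    by (simp add: power_mult_distrib power_mult mult.assoc)
  have "T \<le> 16 * 2 ^ ph * T" by simp
  also have "\<dots> \<le> a * a" by (rule T16)
  also have "a * a < 2 ^ a * 2 ^ a" using less_exp[of a] by (intro mult_strict_mono) auto
  also have "\<dots> = 4 ^ a" by (simp flip: power_mult_distrib)
  finally have "2 * T < 2 * 4 ^ a" by simp
  also have "\<dots> \<le> 2 ^ a * 4 ^ a" using a by (intro mult_right_mono) (auto simp: self_le_power)
  finally have T8: "2 * T < 8 ^ a" by (simp add: power_mult_distrib[symmetric])
  have "2 ^ (b + 1) * T * (T choose a) * fact a \<le> 2 ^ (b + 1) * T * T ^ a"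
    using binomial_fact_pow[of T a] by (simp add: mult.assoc)
  also have "\<dots> \<le> (2 * T) * (2 ^ (ph * a) * T ^ a)"
    using b by (simp add: mult.commute mult.left_commute mult_le_mono2 power_increasing)
  also have "\<dots> < 8 ^ a * (2 ^ (ph * a) * T ^ a)"
    using T8 False a by (intro mult_strict_right_mono) auto
  also have "\<dots> \<le> fact a * (a * a choose a)"
    using L_pow pow_le_fact_mult_choose[of a "a * a"] \<open>2 * a \<le> a * a\<close> unfolding L_def by linarith
  finally show ?thesis by (simp add: mult.commute)
qed

lemma ceiling_bound_cases:
  fixes B :: real and a c :: nat
  assumes "2 \<le> a" "0 < c" "B = real (a * a) / (2 * c)"
  shows "nat \<lceil>B\<rceil> < a \<or> c * nat \<lceil>B\<rceil> \<le> a * a"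
proof (cases "B \<le> 1")
  case True
  then have "\<lceil>B\<rceil> \<le> 1" by (simp add: ceiling_le_iff)
  then show ?thesis using assms(1) by linarith
next
  case False
  then have "real (nat \<lceil>B\<rceil>) < 2 * B" by linarith
  then have "real c * real (nat \<lceil>B\<rceil>) < real c * (2 * B)" using assms(2) by simp
  also have "\<dots> = real (a * a)" using assms(2,3) by simp
  finally show ?thesis by (simp flip: of_nat_mult)
qed

theorem hard_instance:
  fixes f :: "pgraph \<Rightarrow> nat \<Rightarrow> bool list" and A :: algorithm
  assumes a: "2 \<le> a" and advice: "max_advice f (3 * a) \<le> a * ph"
  shows "\<exists>G v. pgraph_wf (3 * a) G \<and> v < 3 * a \<and>
           \<not> (\<exists>k. real k < 1 / 288 * real (3 * a) ^ 2 / 2 ^ ph \<and>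
                    explores_in A (f G v) (3 * a) G v k)"
proof -
  have bound: "1 / 288 * real (3 * a) ^ 2 / 2 ^ ph = real (a * a) / (2 * (16 * 2 ^ ph))"
    by (simp add: power2_eq_square)
  define T where "T = nat \<lceil>real (a * a) / (2 * (16 * 2 ^ ph))\<rceil>"
  have "T < a \<or> 16 * 2 ^ ph * T \<le> a * a"
    using ceiling_bound_cases[OF a, of "16 * 2 ^ ph"] unfolding T_def by simp
  then have few: "2 ^ (a * ph + 1) * T * (T choose a) < (a * a choose a)"
    using exploration_codes_less_binomial[OF a] by blast
  have "length (f (subdivided_biclique a S) 0) \<le> a * ph"
    if "S \<subseteq> {..<a * a}" "card S = a" for S
  proof -
    interpret biclique_subdivision a S using a that(1) by unfold_locales auto
    have "pgraph_wf (3 * a) G" using pgraph_wf_subdivided_biclique that(2) by simp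
    then show ?thesis using length_le_max_advice[of "3 * a" G 0 f] a advice by simp
  qed
  then obtain S where S: "S \<subseteq> {..<a * a}" "card S = a"
    and slow: "\<not> (\<exists>k<T. explores_in A (f (subdivided_biclique a S) 0) (2 * a + a)
                        (subdivided_biclique a S) 0 k)"
    using exists_unexplored_subdivision[OF _ _ few, of f A] a by auto
  interpret biclique_subdivision a S using a S(1) by unfold_locales auto
  have "pgraph_wf (3 * a) G" using pgraph_wf_subdivided_biclique S(2) by simp
  moreover have "k < T" if "real k < 1 / 288 * real (3 * a) ^ 2 / 2 ^ ph" for k
    using that unfolding bound T_def by linarith
  ultimately show ?thesis using slow a by (intro exI[of _ G] exI[of _ 0]) auto
qed

theorem mainTheorem8:
  fixes \<phi> :: "nat \<Rightarrow> nat"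
    and f :: "pgraph \<Rightarrow> nat \<Rightarrow> bool list"
    and A :: algorithm
  assumes "(\<lambda>n. real (max_advice f n)) \<in> o(\<lambda>n. real n * real (\<phi> n))"
  shows "\<exists>c > 0. infinite {n. \<exists>G v. pgraph_wf n G \<and> v < n \<and>
            \<not> (\<exists>k. real k < c * real n ^ 2 / 2 ^ \<phi> n \<and> explores_in A (f G v) n G v k)}"
proof (intro exI conjI)
  obtain N where N: "\<And>n. N \<le> n \<Longrightarrow> real (max_advice f n) \<le> 1 / 3 * (real n * real (\<phi> n))"
    using landau_o.smallD[OF assms, of "1 / 3"] by (auto simp: eventually_at_top_linorder)
  show "infinite {n. \<exists>G v. pgraph_wf n G \<and> v < n \<and>
          \<not> (\<exists>k. real k < 1 / 288 * real n ^ 2 / 2 ^ \<phi> n \<and> explores_in A (f G v) n G v k)}"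
    unfolding infinite_nat_iff_unbounded_le
  proof
    fix m
    define a where "a = m + N + 2"
    have a: "2 \<le> a" "N \<le> 3 * a" "m \<le> 3 * a" unfolding a_def by simp_all
    have "real (max_advice f (3 * a)) \<le> 1 / 3 * (real (3 * a) * real (\<phi> (3 * a)))"
      using N[OF a(2)] by simp
    then have "max_advice f (3 * a) \<le> a * \<phi> (3 * a)" by (simp flip: of_nat_mult)
    from hard_instance[OF a(1) this] a(3)
    show "\<exists>n\<ge>m. n \<in> {n. \<exists>G v. pgraph_wf n G \<and> v < n \<and>
            \<not> (\<exists>k. real k < 1 / 288 * real n ^ 2 / 2 ^ \<phi> n \<and> explores_in A (f G v) n G v k)}"
      by blast
  qed
qed simp

end
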